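(* The entanglement of the domino $D_{14}$ is at least $4$.
   Context: The domino $D_n$ is the graph with vertices $v_i,w_i$ ($i=0,\dots,n$) and edges $v_iv_{i+1},w_iw_{i+1}$ ($i=0,\dots,n-1$) and $v_iw_i$ ($i=0,\dots,n$). Entanglement: in the game $\mathrm{Ent}(G,k)$ Thief plays against $k$ cops on the undirected graph $G$. Initially no cop is placed and Thief picks a vertex. Each round, Cops may do nothing, place a new cop (at most $k$ in total) on Thief's current vertex, or move a placed cop to Thief's current vertex; then Thief must move along an edge to an adjacent vertex not occupied by a cop, and is caught (Cops win) if he cannot. Infinite plays are won by Thief. $\mathrm{Ent}(G)$ is the least $k$ for which Cops have a winning strategy. *)

theory Defs
  imports Main
begin

record 'a ugraph =
  verts :: "'a set"
  adj :: "'a \<Rightarrow> 'a \<Rightarrow> bool"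

text \<open>Domino D_n: vertices v_i = (False,i), w_i = (True,i), 0 \<le> i \<le> n.\<close>
definition domino :: "nat \<Rightarrow> (bool \<times> nat) ugraph" where
  "domino n = \<lparr> verts = {(b,i). i \<le> n},
     adj = (\<lambda>(b,i) (b',j). i \<le> n \<and> j \<le> n \<and>
              ((b = b' \<and> (j = i + 1 \<or> i = j + 1)) \<or> (b \<noteq> b' \<and> i = j))) \<rparr>"

text \<open>Possible cop moves when cops occupy the vertex set C (one cop per vertex; the number
  of cops placed so far is card C) and the thief is at v, with at most k cops in total:
  do nothing, place a new cop on v, or move a placed cop (from u) to v.\<close>
definition cop_moves :: "nat \<Rightarrow> 'a set \<Rightarrow> 'a \<Rightarrow> 'a set set" where
  "cop_moves k C v = {C} \<union> (if card C < k then {insert v C} else {})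
      \<union> {insert v (C - {u}) | u. u \<in> C}"

text \<open>cops_force G k C v: from the position where cops occupy C, the thief sits at v and
  Cops are to move, Cops (with k cops) have a strategy guaranteeing that the thief is
  eventually caught (least fixed point = attractor of the reachability game).\<close>
inductive cops_force :: "'a ugraph \<Rightarrow> nat \<Rightarrow> 'a set \<Rightarrow> 'a \<Rightarrow> bool" for G k where
  step: "C' \<in> cop_moves k C v \<Longrightarrow>
         (\<And>w. adj G v w \<Longrightarrow> w \<in> verts G \<Longrightarrow> w \<notin> C' \<Longrightarrow> cops_force G k C' w) \<Longrightarrow>
         cops_force G k C v"

definition cops_win :: "'a ugraph \<Rightarrow> nat \<Rightarrow> bool" where
  "cops_win G k \<longleftrightarrow> (\<forall>v \<in> verts G. cops_force G k {} v)"

definition entanglement :: "'a ugraph \<Rightarrow> nat" where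
  "entanglement G = (LEAST k. cops_win G k)"

end

theory Submission
  imports Defs
begin

text \<open>
  Three cops already lose on \<open>D\<^sub>9\<close>, hence on every larger domino. The thief stays in
  \<open>D\<^sub>9\<close> and avoids a table of traps: for each vertex, a few cop sets of size two or three
  that he must not face there. Avoiding traps is self-sustaining: from every position with at
  most three cops in which the thief is not trapped, each cop move leaves him a free neighbour
  at which he is again not trapped. Whether he is trapped next to \<open>v\<close> only depends on the
  cops in a small region around \<open>v\<close>, so this closure property is a finite computation.
\<close>

lemma cop_moves_mono: "k \<le> k' \<Longrightarrow> cop_moves k C v \<subseteq> cop_moves k' C v"
  by (auto simp: cop_moves_def)

lemma cops_force_mono: "cops_force G k C v \<Longrightarrow> k \<le> k' \<Longrightarrow> cops_force G k' C v"
proof (induction rule: cops_force.induct)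
  case (step C' C v)
  have "C' \<in> cop_moves k' C v"
    using cop_moves_mono[OF step.prems] step.hyps(1) by (rule subsetD)
  then show ?case
  proof (rule cops_force.step)
    fix w
    assume "adj G v w" "w \<in> verts G" "w \<notin> C'"
    then show "cops_force G k' C' w"
      using step.IH step.prems by simp
  qed
qed

lemma cops_win_mono: "cops_win G k \<Longrightarrow> k \<le> k' \<Longrightarrow> cops_win G k'"
  unfolding cops_win_def by (metis cops_force_mono)

lemma cop_moves_card_le:
  assumes "C' \<in> cop_moves k C v" "finite C" "card C \<le> k"
  shows "finite C' \<and> card C' \<le> k"
proof -
  have "card (insert v (C - {u})) \<le> card C" if "u \<in> C" for u
  proof -
    have "card (insert v (C - {u})) \<le> Suc (card (C - {u}))"
      using assms(2) by (simp add: card_insert_le_m1)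
    also have "\<dots> = card C"
      using card_Suc_Diff1[OF assms(2) that] .
    finally show ?thesis .
  qed
  then show ?thesis
    using assms by (auto simp: cop_moves_def card_insert_if split: if_splits)
qed

definition escape_set :: "'a ugraph \<Rightarrow> nat \<Rightarrow> ('a set \<times> 'a) set \<Rightarrow> bool" where
  "escape_set G k S \<longleftrightarrow>
     (\<forall>(C, v) \<in> S. \<forall>C' \<in> cop_moves k C v.
        \<exists>w. adj G v w \<and> w \<in> verts G \<and> w \<notin> C' \<and> (C', w) \<in> S)"

lemma escape_set_not_cops_force:
  "cops_force G k C v \<Longrightarrow> escape_set G k S \<Longrightarrow> (C, v) \<notin> S"
proof (induction rule: cops_force.induct)
  case (step C' C v)
  show ?case
  proof
    assume "(C, v) \<in> S"
    then obtain w where "adj G v w" "w \<in> verts G" "w \<notin> C'" "(C', w) \<in> S"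
      using step.prems step.hyps(1) unfolding escape_set_def by blast
    then show False
      using step.IH step.prems by blast
  qed
qed

lemma escape_set_not_cops_win:
  "escape_set G k S \<Longrightarrow> ({}, v) \<in> S \<Longrightarrow> v \<in> verts G \<Longrightarrow> \<not> cops_win G k"
  unfolding cops_win_def by (metis escape_set_not_cops_force)

fun subseqs_upto :: "nat \<Rightarrow> 'a list \<Rightarrow> 'a list list" where
  "subseqs_upto 0 xs = [[]]"
| "subseqs_upto (Suc k) [] = [[]]"
| "subseqs_upto (Suc k) (x # xs) = map ((#) x) (subseqs_upto k xs) @ subseqs_upto (Suc k) xs"

lemma subseqs_upto_complete:
  "X \<subseteq> set xs \<Longrightarrow> card X \<le> k \<Longrightarrow> \<exists>ys \<in> set (subseqs_upto k xs). set ys = X \<and> distinct ys"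
proof (induction k xs arbitrary: X rule: subseqs_upto.induct)
  case (1 xs)
  then show ?case
    using finite_subset[OF 1(1)] by auto
next
  case (3 k x xs)
  have fin: "finite X"
    using "3.prems"(1) finite_subset by blast
  show ?case
  proof (cases "x \<in> X")
    case True
    moreover have "X - {x} \<subseteq> set xs" "card (X - {x}) \<le> k"
      using "3.prems" fin True by auto
    ultimately obtain ys where "ys \<in> set (subseqs_upto k xs)" "set ys = X - {x}" "distinct ys"
      using "3.IH"(1) by blast
    then show ?thesis
      using True by (intro bexI[of _ "x # ys"]) auto
  next
    case False
    then have "X \<subseteq> set xs"
      using "3.prems"(1) by auto
    then obtain ys where "ys \<in> set (subseqs_upto (Suc k) xs)" "set ys = X" "distinct ys"
      using "3.IH"(2) "3.prems"(2) by blast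
    then show ?thesis
      by auto
  qed
qed auto

text \<open>In the certificates below, \<open>T v\<close> lists the traps at \<open>v\<close> and \<open>N v\<close> lists neighbours of
  \<open>v\<close> the thief may flee to.\<close>

definition trapped :: "('a \<Rightarrow> 'a list list) \<Rightarrow> 'a set \<Rightarrow> 'a \<Rightarrow> bool" where
  "trapped T C v \<longleftrightarrow> (\<exists>M \<in> set (T v). set M \<subseteq> C)"

definition safe_positions :: "('a \<Rightarrow> 'a list list) \<Rightarrow> nat \<Rightarrow> 'a set \<Rightarrow> ('a set \<times> 'a) set" where
  "safe_positions T k V =
     {(C, v). finite C \<and> card C \<le> k \<and> v \<in> V \<and> v \<notin> C \<and> \<not> trapped T C v}"

definition escapes :: "('a \<Rightarrow> 'a list) \<Rightarrow> ('a \<Rightarrow> 'a list list) \<Rightarrow> 'a list \<Rightarrow> 'a \<Rightarrow> bool" where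
  "escapes N T xs v \<longleftrightarrow> (\<exists>w \<in> set (N v). w \<notin> set xs \<and> \<not> trapped T (set xs) w)"

definition local_region :: "('a \<Rightarrow> 'a list) \<Rightarrow> ('a \<Rightarrow> 'a list list) \<Rightarrow> 'a \<Rightarrow> 'a list" where
  "local_region N T v = remdups (v # concat (T v) @ concat (map (\<lambda>w. w # concat (T w)) (N v)))"

text \<open>Here \<open>xs\<close> lists the cops inside the local region of \<open>v\<close>. The conjuncts cover the cops
  staying, placing a new cop on \<open>v\<close>, and moving a cop onto \<open>v\<close>; seen from the region, moving a
  cop from outside it looks like placing a new one.\<close>

definition escapes_all_moves ::
    "('a \<Rightarrow> 'a list) \<Rightarrow> ('a \<Rightarrow> 'a list list) \<Rightarrow> nat \<Rightarrow> 'a \<Rightarrow> 'a list \<Rightarrow> bool" where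
  "escapes_all_moves N T k v xs \<longleftrightarrow>
     (v \<notin> set xs \<and> \<not> trapped T (set xs) v \<longrightarrow>
        escapes N T xs v \<and> (length xs < k \<longrightarrow> escapes N T (v # xs) v) \<and>
        (\<forall>u \<in> set xs. escapes N T (v # removeAll u xs) v))"

definition certified :: "('a \<Rightarrow> 'a list) \<Rightarrow> ('a \<Rightarrow> 'a list list) \<Rightarrow> nat \<Rightarrow> 'a list \<Rightarrow> bool" where
  "certified N T k V \<longleftrightarrow>
     (\<forall>v \<in> set V. \<forall>xs \<in> set (subseqs_upto k (local_region N T v)). escapes_all_moves N T k v xs)"

lemma trapped_local:
  "\<forall>M \<in> set (T w). set M \<subseteq> A \<Longrightarrow> trapped T (C \<inter> A) w \<longleftrightarrow> trapped T C w"
  by (auto simp: trapped_def)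

lemma escapes_lift:
  assumes "escapes N T xs v" "set xs = C \<inter> set (local_region N T v)"
  shows "\<exists>w \<in> set (N v). w \<notin> C \<and> \<not> trapped T C w"
proof -
  obtain w where w: "w \<in> set (N v)" "w \<notin> set xs" "\<not> trapped T (set xs) w"
    using assms(1) by (auto simp: escapes_def)
  have "w \<in> set (local_region N T v)" "\<forall>M \<in> set (T w). set M \<subseteq> set (local_region N T v)"
    using w(1) by (auto simp: local_region_def)
  then show ?thesis
    using w assms(2) trapped_local[of T w] by auto
qed

lemma certified_escape:
  assumes cert: "certified N T k V" and "v \<in> set V" and fin: "finite C" and "card C \<le> k"
    and safe: "v \<notin> C" "\<not> trapped T C v" and move: "C' \<in> cop_moves k C v"
  shows "\<exists>w \<in> set (N v). w \<notin> C' \<and> \<not> trapped T C' w"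
proof -
  define A where "A = set (local_region N T v)"
  have "v \<in> A" "\<forall>M \<in> set (T v). set M \<subseteq> A"
    by (auto simp: A_def local_region_def)
  moreover have "card (C \<inter> A) \<le> k"
    using fin \<open>card C \<le> k\<close> card_mono[of C "C \<inter> A"] by auto
  ultimately obtain xs where xs: "xs \<in> set (subseqs_upto k (local_region N T v))"
      "set xs = C \<inter> A" "distinct xs" "v \<notin> set xs" "\<not> trapped T (set xs) v"
    using subseqs_upto_complete[of "C \<inter> A" "local_region N T v" k] safe trapped_local[of T v A C]
    by (auto simp: A_def)
  have len: "length xs = card (C \<inter> A)"
    using xs(2,3) distinct_card by metis
  have ok: "escapes N T xs v" "length xs < k \<Longrightarrow> escapes N T (v # xs) v"
      "\<And>u. u \<in> set xs \<Longrightarrow> escapes N T (v # removeAll u xs) v"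
    using cert \<open>v \<in> set V\<close> xs by (auto simp: certified_def escapes_all_moves_def)
  from move consider "C' = C" | "card C < k" "C' = insert v C"
    | u where "u \<in> C" "C' = insert v (C - {u})"
    by (auto simp: cop_moves_def split: if_splits)
  then show ?thesis
  proof cases
    case 1
    then show ?thesis
      using escapes_lift[OF ok(1)] xs(2) by (simp add: A_def)
  next
    case 2
    have "length xs < k"
      using len card_mono[OF fin, of "C \<inter> A"] 2(1) by auto
    then show ?thesis
      using escapes_lift[OF ok(2), of "insert v C"] xs(2) \<open>v \<in> A\<close> 2(2) by (auto simp: A_def)
  next
    case (3 u)
    show ?thesis
    proof (cases "u \<in> A")
      case True
      then show ?thesis
        using escapes_lift[OF ok(3), of u C'] xs(2) \<open>v \<in> A\<close> 3 by (auto simp: A_def)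
    next
      case False
      then have "card (C \<inter> A) < card C"
        using 3(1) fin by (intro psubset_card_mono) auto
      then have "length xs < k"
        using len \<open>card C \<le> k\<close> by simp
      moreover have "insert v (C - {u}) \<inter> A = insert v C \<inter> A"
        using False by auto
      ultimately show ?thesis
        using escapes_lift[OF ok(2), of C'] xs(2) \<open>v \<in> A\<close> 3(2) by (auto simp: A_def)
    qed
  qed
qed

lemma certified_escape_set:
  assumes nbrs: "\<And>v w. v \<in> set V \<Longrightarrow> w \<in> set (N v) \<Longrightarrow> adj G v w \<and> w \<in> verts G \<and> w \<in> set V"
    and cert: "certified N T k V"
  shows "escape_set G k (safe_positions T k (set V))"
  unfolding escape_set_def
proof clarify
  fix C v C'
  assume "(C, v) \<in> safe_positions T k (set V)" and move: "C' \<in> cop_moves k C v"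
  then have safe: "finite C" "card C \<le> k" "v \<in> set V" "v \<notin> C" "\<not> trapped T C v"
    by (auto simp: safe_positions_def)
  obtain w where "w \<in> set (N v)" "w \<notin> C'" "\<not> trapped T C' w"
    using certified_escape[OF cert safe(3,1,2,4,5) move] by blast
  moreover have "finite C' \<and> card C' \<le> k"
    using cop_moves_card_le[OF move safe(1,2)] .
  ultimately show "\<exists>w. adj G v w \<and> w \<in> verts G \<and> w \<notin> C' \<and> (C', w) \<in> safe_positions T k (set V)"
    using nbrs[OF safe(3)] by (auto simp: safe_positions_def)
qed

definition ladder_verts :: "(bool \<times> nat) list" where
  "ladder_verts = [(b, i). b \<leftarrow> [False, True], i \<leftarrow> [0..<10]]"

fun ladder_nbrs :: "bool \<times> nat \<Rightarrow> (bool \<times> nat) list" where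
  "ladder_nbrs (b, i) =
     (\<not> b, i) # (if 0 < i then [(b, i - 1)] else []) @ (if i < 9 then [(b, i + 1)] else [])"

text \<open>The trap table is invariant under exchanging the two rows and under \<open>i \<mapsto> 9 - i\<close>, so it
  is given for \<open>v\<^sub>0, \<dots>, v\<^sub>4\<close> only; a pair \<open>(vs, ws)\<close> stands for cops on the thief's row at
  the positions \<open>vs\<close> and on the other row at the positions \<open>ws\<close>.\<close>

definition ladder_trap_base :: "(nat list \<times> nat list) list list" where
  "ladder_trap_base =
    [[([1],[0]), ([2],[3]), ([2],[2]), ([2],[1]), ([3],[2]), ([1],[1]), ([1],[2])],
     [([2],[3]), ([3],[2]), ([2],[1]), ([2],[2])],
     [([3],[3]), ([3],[2]), ([1,3],[4]), ([4],[3])],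
     [([4],[3])],
     [([3,5],[4])]]"

definition ladder_traps :: "bool \<times> nat \<Rightarrow> (bool \<times> nat) list list" where
  "ladder_traps v = (case v of (b, i) \<Rightarrow>
     let r = (\<lambda>j. if i \<le> 4 then j else 9 - j)
     in map (\<lambda>(vs, ws). map (\<lambda>j. (b, r j)) vs @ map (\<lambda>j. (\<not> b, r j)) ws)
          (ladder_trap_base ! r i))"

lemma mem_ladder_verts: "(b, i) \<in> set ladder_verts \<longleftrightarrow> i < 10"
  by (cases b) (auto simp: ladder_verts_def)

lemma ladder_nbrs_domino:
  assumes "9 \<le> n" "v \<in> set ladder_verts" "w \<in> set (ladder_nbrs v)"
  shows "adj (domino n) v w \<and> w \<in> verts (domino n) \<and> w \<in> set ladder_verts"
proof -
  obtain b i where "v = (b, i)"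
    by fastforce
  then show ?thesis
    using assms by (auto simp: domino_def mem_ladder_verts split: if_splits)
qed

lemma ladder_certified: "certified ladder_nbrs ladder_traps 3 ladder_verts"
  by code_simp

theorem cops_win_domino_ge_4:
  assumes "9 \<le> n" "cops_win (domino n) k"
  shows "4 \<le> k"
proof (rule ccontr)
  assume "\<not> 4 \<le> k"
  then have "cops_win (domino n) 3"
    using cops_win_mono[OF assms(2), of 3] by simp
  moreover have "escape_set (domino n) 3 (safe_positions ladder_traps 3 (set ladder_verts))"
    using certified_escape_set[OF ladder_nbrs_domino[OF assms(1)] ladder_certified] .
  moreover have "({}, (False, 0)) \<in> safe_positions ladder_traps 3 (set ladder_verts)"
    by (auto simp: safe_positions_def trapped_def mem_ladder_verts ladder_traps_def ladder_trap_base_def)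
  ultimately show False
    using escape_set_not_cops_win by (fastforce simp: domino_def)
qed

theorem mainTheorem13:
  shows "\<forall>k. cops_win (domino 14) k \<longrightarrow> 4 \<le> k"
  using cops_win_domino_ge_4[of 14] by simp

end
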